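(* Assume there is $\delta>0$ such that $\alpha\big(\{((p_i)_{i\in\mathbb N_0},h)\in\Omega: p_1=1\}\big)<1$ and $\alpha\big(\{((p_i)_{i\in\mathbb N_0},h)\in\Omega: p_0\le 1-\delta,\ h\in[\delta,1-\delta]\}\big)=1$, and assume $M<\infty$. Let $\varepsilon>0$ and $r,s\in\mathbb N$ with $r\le s$ and $\beta(\tfrac rs)-\varepsilon>0$, and let $N_0\in\mathbb N$ be such that for $\mathsf P$-a.e. $\omega$, $P_\omega\big(\liminf_{n\to\infty}\tfrac{1}{nsN_0}\log\eta_{nsN_0}(nrN_0)\ge\beta(\tfrac rs)-\varepsilon\big)>0$. Then there exists $\nu>0$ such that for $\mathsf P$-a.e. $\omega$ there is an increasing sequence $(x_l)_{l\in\mathbb N_0}=(x_l(\omega))_{l\in\mathbb N_0}$ in $\mathbb N_0$ such that for all $l\in\mathbb N_0$, $$P^{x_l}_\omega\Big(\liminf_{n\to\infty}\tfrac{1}{nsN_0}\log\eta_{nsN_0}(x_l+nrN_0)\ge\beta(\tfrac rs)-\varepsilon\Big)>\nu.$$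
   Context: Let $\mathcal M$ be the set of probability measures $(p_i)_{i\in\mathbb N_0}$ on $\mathbb N_0$ (offspring distributions) and $\Omega=\mathcal M\times(0,1]$. Let $\alpha$ be a probability measure on $\Omega$. A random environment $\omega=(\omega_x)_{x\in\mathbb N_0}=(\mu_x,h_x)_{x\in\mathbb N_0}$ is an i.i.d. sequence with law $\alpha$; write $\mathsf P=\alpha^{\otimes\mathbb N_0}$. Let $m_x=\sum_{k\ge0}k\,\mu_x(\{k\})$ and $M=\operatorname{ess\,sup} m_0$. Given $\omega$, the branching random walk in random environment on $\mathbb N_0$ evolves in discrete time as follows: at each time step every existing particle at a site $x$ produces offspring according to $\mu_x$, independently of all other particles, and dies; then every newly produced particle independently moves from $x$ to $x+1$ with probability $h_x$ and stays at $x$ with probability $1-h_x$. $P^x_\omega$ denotes the quenched law of the process started with one particle at $x$, $P_\omega=P^0_\omega$, and $\eta_n(y)$ is the number of particles at site $y$ at time $n$. Under the stated assumptions there is a unique deterministic continuous concave function $\beta:[0,1]\to\mathbb R$ such that for every $\gamma>0$, for $\mathsf P$-a.e. $\omega$, $\lim_{n\to\infty}\max_{x\in n[\gamma,1]\cap\mathbb N}\big|\tfrac1n\log E_\omega[\eta_n(x)]-\beta(\tfrac xn)\big|=0$; this is the function $\beta$ in the claim. Such an $N_0$ exists by a lemma of the paper. *)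

theory Defs
  imports "HOL-Probability.Probability"
begin

text \<open>Environment at a site: an offspring distribution (a pmf on the naturals) and a
  jump probability h.\<close>

type_synonym site_env = "nat pmf \<times> real"

definition offspring_M :: "nat pmf measure" where
  "offspring_M = vimage_algebra UNIV (\<lambda>\<mu>. pmf \<mu>) (Pi\<^sub>M UNIV (\<lambda>_::nat. (borel :: real measure)))"

definition site_M :: "site_env measure" where
  "site_M = offspring_M \<Otimes>\<^sub>M (borel :: real measure)"

definition env_law :: "site_env measure \<Rightarrow> (nat \<Rightarrow> site_env) measure" where
  "env_law \<alpha> = Pi\<^sub>M UNIV (\<lambda>_::nat. \<alpha>)"

definition mean_off :: "nat pmf \<Rightarrow> ennreal" where
  "mean_off \<mu> = (\<integral>\<^sup>+ k. ennreal (real k) \<partial>measure_pmf \<mu>)"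

text \<open>The randomness consists of
  K(t,y,j): number of offspring of the j-th particle at site y at time t, and
  B(t,y,j,i): whether its i-th child jumps to y+1 (True) or stays at y (False).\<close>
type_synonym randomness = "((nat \<times> nat \<times> nat) \<Rightarrow> nat) \<times> ((nat \<times> nat \<times> nat \<times> nat) \<Rightarrow> bool)"

primrec eta :: "nat \<Rightarrow> randomness \<Rightarrow> nat \<Rightarrow> nat \<Rightarrow> nat" where
  "eta x0 kb 0 = (\<lambda>y. if y = x0 then 1 else 0)"
| "eta x0 kb (Suc t) = (\<lambda>y.
      (\<Sum>j<eta x0 kb t y. card {i. i < fst kb (t, y, j) \<and> \<not> snd kb (t, y, j, i)})
    + (if y = 0 then 0 else
      (\<Sum>j<eta x0 kb t (y - 1). card {i. i < fst kb (t, y - 1, j) \<and> snd kb (t, y - 1, j, i)})))"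

definition rand_law :: "(nat \<Rightarrow> site_env) \<Rightarrow> randomness measure" where
  "rand_law \<omega> =
     (Pi\<^sub>M UNIV (\<lambda>k::nat \<times> nat \<times> nat. measure_pmf (fst (\<omega> (fst (snd k))))))
     \<Otimes>\<^sub>M (Pi\<^sub>M UNIV (\<lambda>k::nat \<times> nat \<times> nat \<times> nat. measure_pmf (bernoulli_pmf (snd (\<omega> (fst (snd k)))))))"

definition qprob :: "(nat \<Rightarrow> site_env) \<Rightarrow> nat \<Rightarrow> ((nat \<Rightarrow> nat \<Rightarrow> nat) \<Rightarrow> bool) \<Rightarrow> real" where
  "qprob \<omega> x E = measure (rand_law \<omega>) {kb \<in> space (rand_law \<omega>). E (eta x kb)}"

definition qmean :: "(nat \<Rightarrow> site_env) \<Rightarrow> nat \<Rightarrow> nat \<Rightarrow> ennreal" where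
  "qmean \<omega> n y = (\<integral>\<^sup>+ kb. ennreal (real (eta 0 kb n y)) \<partial>rand_law \<omega>)"

definition lg :: "nat \<Rightarrow> ereal" where
  "lg k = (if k = 0 then -\<infinity> else ereal (ln (real k)))"

definition is_beta :: "site_env measure \<Rightarrow> (real \<Rightarrow> real) \<Rightarrow> bool" where
  "is_beta \<alpha> \<beta> \<longleftrightarrow> continuous_on {0..1} \<beta> \<and> concave_on {0..1} \<beta> \<and>
     (\<forall>\<gamma>. 0 < \<gamma> \<and> \<gamma> \<le> 1 \<longrightarrow>
        (AE \<omega> in env_law \<alpha>.
          (\<lambda>n. Max {\<bar>ln (enn2real (qmean \<omega> n x)) / real n - \<beta> (real x / real n)\<bar>
                    | x::nat. \<gamma> * real n \<le> real x \<and> x \<le> n \<and> 0 < x}) \<longlonglongrightarrow> 0))"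

end

theory Submission
  imports Defs
begin

text \<open>
  Relabelling sites by \<open>y \<mapsto> y + x\<close> carries the construction started at \<open>x\<close> in the
  environment \<open>\<omega>\<close> to the construction started at \<open>0\<close> in the shifted environment
  \<open>\<theta>\<^sup>x \<omega> = \<omega>(\<cdot> + x)\<close>. Hence the probability in question at the starting point \<open>x\<close> equals
  \<open>g (\<theta>\<^sup>x \<omega>)\<close>, where \<open>g \<omega>\<close> is the probability of the event started at \<open>0\<close>; \<open>g\<close> is a
  measurable function of the environment and positive almost surely. Choose \<open>\<nu> > 0\<close> with
  \<open>P(g > \<nu>) > 0\<close>. The event that \<open>g (\<theta>\<^sup>x \<omega>) > \<nu>\<close> for infinitely many \<open>x\<close> is shift
  invariant, hence a tail event of the i.i.d. sequence \<open>\<omega>\<close>, so by Kolmogorov's 0-1 law its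
  probability is 0 or 1; it is at least \<open>P(g > \<nu>)\<close> by stationarity, hence 1. Enumerating
  these \<open>x\<close> gives the sequence. Only the i.i.d. structure of the environment is used; the
  remaining hypotheses matter only for the existence of \<open>\<beta>\<close> and \<open>N0\<close>.
\<close>

section \<open>Measurability of the particle numbers\<close>

abbreviation randomness_M :: "randomness measure" where
  "randomness_M \<equiv>
     Pi\<^sub>M UNIV (\<lambda>_::nat \<times> nat \<times> nat. count_space (UNIV::nat set))
     \<Otimes>\<^sub>M Pi\<^sub>M UNIV (\<lambda>_::nat \<times> nat \<times> nat \<times> nat. count_space (UNIV::bool set))"

lemma space_randomness_M: "space randomness_M = UNIV"
  by (simp add: space_pair_measure space_PiM)

lemma measurable_sum_lessThan_nat:
  fixes c :: "nat \<Rightarrow> 'a \<Rightarrow> nat"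
  assumes c: "\<And>j. c j \<in> measurable M (count_space UNIV)"
    and g: "g \<in> measurable M (count_space UNIV)"
  shows "(\<lambda>x. \<Sum>j<g x. c j x) \<in> measurable M (count_space UNIV)"
proof -
  have "(\<lambda>x. \<Sum>j<n. c j x) \<in> measurable M (count_space UNIV)" for n
  proof (induction n)
    case (Suc n)
    then show ?case using c[of n] by simp measurable
  qed simp
  then show ?thesis by (rule measurable_compose_countable[OF _ g])
qed

lemma measurable_card_children:
  fixes Q :: "bool \<Rightarrow> bool"
  shows "(\<lambda>kb. card {i. i < fst kb (t, y, j) \<and> Q (snd kb (t, y, j, i))})
           \<in> measurable randomness_M (count_space UNIV)"
proof -
  have "card {i. i < m \<and> P i} = (\<Sum>i<m. if P i then 1 else 0)" for m and P :: "nat \<Rightarrow> bool"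
    by (simp add: sum.If_cases Int_def conj_commute)
  moreover have "(\<lambda>kb::randomness. \<Sum>i<fst kb (t, y, j). if Q (snd kb (t, y, j, i)) then 1 else (0::nat))
                   \<in> measurable randomness_M (count_space UNIV)"
    by (rule measurable_sum_lessThan_nat[where c = "\<lambda>i kb. if Q (snd kb (t, y, j, i)) then 1 else 0"])
      measurable
  ultimately show ?thesis by simp
qed

lemma measurable_eta: "(\<lambda>kb. eta x kb t y) \<in> measurable randomness_M (count_space UNIV)"
proof (induction t arbitrary: y)
  case (Suc t)
  have stay: "(\<lambda>kb. \<Sum>j<eta x kb t y. card {i. i < fst kb (t, y, j) \<and> \<not> snd kb (t, y, j, i)})
                \<in> measurable randomness_M (count_space UNIV)"
    by (rule measurable_sum_lessThan_nat[OF measurable_card_children Suc])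
  have jump: "(\<lambda>kb. \<Sum>j<eta x kb t (y - 1). card {i. i < fst kb (t, y - 1, j) \<and> snd kb (t, y - 1, j, i)})
                \<in> measurable randomness_M (count_space UNIV)"
    using measurable_sum_lessThan_nat[OF measurable_card_children[where Q = "\<lambda>b. b"] Suc] by simp
  have add: "(\<lambda>kb. f kb + g kb) \<in> measurable randomness_M (count_space UNIV)"
    if "f \<in> measurable randomness_M (count_space UNIV)" "g \<in> measurable randomness_M (count_space UNIV)"
    for f g :: "randomness \<Rightarrow> nat"
    using that by measurable
  show ?case
  proof (cases "y = 0")
    case True
    then show ?thesis using stay by (simp only: eta.simps simp_thms(6) if_True add_0_right)
  next
    case False
    then show ?thesis using add[OF stay jump] by (simp only: eta.simps if_False)
  qed
qed simp

lemma sets_liminf_lg_eta: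
  "{kb \<in> space randomness_M. c \<le> liminf (\<lambda>n. lg (eta x kb (a n) (b n)) / ereal (d n))}
     \<in> sets randomness_M"
proof -
  have "(\<lambda>kb. lg (eta x kb (a n) (b n)) / ereal (d n)) \<in> borel_measurable randomness_M" for n
    using measurable_compose[OF measurable_eta, of "\<lambda>k. lg k / ereal (d n)" borel] by simp
  then have "(\<lambda>kb. liminf (\<lambda>n. lg (eta x kb (a n) (b n)) / ereal (d n))) \<in> borel_measurable randomness_M"
    by (rule borel_measurable_liminf)
  then show ?thesis by measurable
qed

section \<open>Translation invariance\<close>

definition shift_seq :: "nat \<Rightarrow> (nat \<Rightarrow> 'a) \<Rightarrow> nat \<Rightarrow> 'a" where
  "shift_seq x \<omega> = (\<lambda>n. \<omega> (n + x))"

lemma shift_seq_shift_seq: "shift_seq x (shift_seq n \<omega>) = shift_seq (x + n) \<omega>"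
  by (simp add: shift_seq_def add.assoc)

definition shift_site :: "nat \<Rightarrow> nat \<times> nat \<times> 'c \<Rightarrow> nat \<times> nat \<times> 'c" where
  "shift_site x = (\<lambda>(t, y, j). (t, y + x, j))"

definition shift_rand :: "nat \<Rightarrow> randomness \<Rightarrow> randomness" where
  "shift_rand x = map_prod (\<lambda>K. K \<circ> shift_site x) (\<lambda>B. B \<circ> shift_site x)"

lemma eta_eq_shift_rand:
  "eta x kb t y = (if y < x then 0 else eta 0 (shift_rand x kb) t (y - x))"
proof (induction t arbitrary: y)
  case (Suc t)
  show ?case
  proof (cases "y < x")
    case True
    then have "eta x kb t y = 0" "y \<noteq> 0 \<Longrightarrow> eta x kb t (y - 1) = 0"
      using Suc[of y] Suc[of "y - 1"] by simp_all
    then show ?thesis using True by simp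
  next
    case False
    then obtain z where y: "y = z + x" by (metis add.commute le_Suc_ex not_less)
    have "y = 0 \<or> eta x kb t (y - 1) = 0" if "z = 0"
      using Suc[of "y - 1"] that y by auto
    moreover have "eta x kb t (y - 1) = eta 0 (shift_rand x kb) t (z - 1)" if "z \<noteq> 0"
      using Suc[of "y - 1"] that y by simp
    ultimately show ?thesis
      using Suc[of y] y by (auto simp: shift_rand_def shift_site_def)
  qed
qed simp

lemma eta_add_start: "eta x kb t (x + y) = eta 0 (shift_rand x kb) t y"
  using eta_eq_shift_rand[of x kb t "x + y"] by simp

lemma measurable_comp_shift_site:
  "(\<lambda>a. a \<circ> shift_site x) \<in> measurable (\<Pi>\<^sub>M k\<in>UNIV. N (fst (snd k))) (\<Pi>\<^sub>M k\<in>UNIV. N (fst (snd k) + x))"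
proof -
  have N: "N (fst (snd (shift_site x k))) = N (fst (snd k) + x)" for k :: "nat \<times> nat \<times> 'c"
    by (simp add: shift_site_def split: prod.splits)
  have "(\<lambda>a k. a (shift_site x k))
          \<in> measurable (\<Pi>\<^sub>M k\<in>UNIV. N (fst (snd k))) (\<Pi>\<^sub>M k\<in>UNIV. N (fst (snd k) + x))"
  proof (rule measurable_PiM_single')
    fix k :: "nat \<times> nat \<times> 'c"
    show "(\<lambda>a. a (shift_site x k)) \<in> measurable (\<Pi>\<^sub>M k\<in>UNIV. N (fst (snd k))) (N (fst (snd k) + x))"
      using measurable_component_singleton[of "shift_site x k" UNIV "\<lambda>k. N (fst (snd k))"]
      by (simp add: N)
  next
    show "(\<lambda>a k. a (shift_site x k))
            \<in> space (\<Pi>\<^sub>M k\<in>UNIV. N (fst (snd k))) \<rightarrow> (\<Pi>\<^sub>E k\<in>UNIV. space (N (fst (snd k) + x)))"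
      by (auto simp: space_PiM PiE_iff N[symmetric])
  qed
  then show ?thesis by (simp add: comp_def)
qed

lemma distr_comp_shift_site:
  assumes "\<And>y. prob_space (N y)"
  shows "distr (\<Pi>\<^sub>M k\<in>UNIV. N (fst (snd k))) (\<Pi>\<^sub>M k\<in>UNIV. N (fst (snd k) + x)) (\<lambda>a. a \<circ> shift_site x)
           = (\<Pi>\<^sub>M k\<in>UNIV. N (fst (snd k) + x))"
proof -
  have inj: "inj (shift_site x :: nat \<times> nat \<times> 'c \<Rightarrow> _)"
    by (auto simp: inj_def shift_site_def)
  have N: "(\<lambda>k. N (fst (snd (shift_site x k)))) = (\<lambda>k. N (fst (snd k) + x))"
    by (auto simp: shift_site_def fun_eq_iff split: prod.splits)
  have "distr (\<Pi>\<^sub>M k\<in>UNIV. N (fst (snd k))) (\<Pi>\<^sub>M k\<in>UNIV. N (fst (snd (shift_site x k))))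
               (\<lambda>a. \<lambda>k\<in>UNIV. a (shift_site x k :: nat \<times> nat \<times> 'c))
             = (\<Pi>\<^sub>M k\<in>UNIV. N (fst (snd (shift_site x k))))"
    using inj by (intro distr_PiM_reindex) (auto simp: assms)
  then show ?thesis unfolding N by (simp add: comp_def restrict_UNIV)
qed

lemma sets_rand_law: "sets (rand_law \<omega>) = sets randomness_M"
  unfolding rand_law_def by (intro sets_pair_measure_cong sets_PiM_cong) auto

lemma space_rand_law: "space (rand_law \<omega>) = UNIV"
  by (simp add: rand_law_def space_pair_measure space_PiM)

lemma measurable_shift_rand:
  "shift_rand x \<in> measurable (rand_law \<omega>) (rand_law (shift_seq x \<omega>))"
  unfolding rand_law_def shift_rand_def map_prod_def case_prod_beta' shift_seq_def
  by (intro measurable_Pair measurable_compose[OF measurable_fst measurable_comp_shift_site]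
        measurable_compose[OF measurable_snd measurable_comp_shift_site])

lemma distr_rand_law_shift_rand:
  "distr (rand_law \<omega>) (rand_law (shift_seq x \<omega>)) (shift_rand x) = rand_law (shift_seq x \<omega>)"
proof -
  define K where "K y = measure_pmf (fst (\<omega> y))" for y
  define B where "B y = measure_pmf (bernoulli_pmf (snd (\<omega> y)))" for y
  have pK: "prob_space (K y)" and pB: "prob_space (B y)" for y
    by (simp_all add: K_def B_def prob_space_measure_pmf)
  have law: "rand_law \<omega> = (\<Pi>\<^sub>M k\<in>UNIV. K (fst (snd k))) \<Otimes>\<^sub>M (\<Pi>\<^sub>M k\<in>UNIV. B (fst (snd k)))"
    and law_shift: "rand_law (shift_seq x \<omega>)
      = (\<Pi>\<^sub>M k\<in>UNIV. K (fst (snd k) + x)) \<Otimes>\<^sub>M (\<Pi>\<^sub>M k\<in>UNIV. B (fst (snd k) + x))"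
    by (simp_all add: rand_law_def K_def B_def shift_seq_def)
  interpret B: prob_space "\<Pi>\<^sub>M k\<in>UNIV. B (fst (snd k) + x)"
    by (intro prob_space_PiM pB)
  have "sigma_finite_measure
          (distr (\<Pi>\<^sub>M k\<in>UNIV. B (fst (snd k))) (\<Pi>\<^sub>M k\<in>UNIV. B (fst (snd k) + x))
             (\<lambda>a::nat \<times> nat \<times> nat \<times> nat \<Rightarrow> bool. a \<circ> shift_site x))"
    unfolding distr_comp_shift_site[where N = B, OF pB] by unfold_locales
  from pair_measure_distr[OF measurable_comp_shift_site[of x K] measurable_comp_shift_site[of x B] this]
  show ?thesis
    unfolding law law_shift shift_rand_def map_prod_def
      distr_comp_shift_site[where N = K, OF pK] distr_comp_shift_site[where N = B, OF pB]
    by (rule sym)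
qed

lemma qprob_shift_start:
  assumes "{kb \<in> space randomness_M. P (\<lambda>n. eta 0 kb (a n) (b n))} \<in> sets randomness_M"
  shows "qprob \<omega> x (\<lambda>\<eta>. P (\<lambda>n. \<eta> (a n) (x + b n)))
           = qprob (shift_seq x \<omega>) 0 (\<lambda>\<eta>. P (\<lambda>n. \<eta> (a n) (b n)))"
proof -
  let ?S = "{kb. P (\<lambda>n. eta 0 kb (a n) (b n))}"
  have S: "?S \<in> sets (rand_law (shift_seq x \<omega>))"
    using assms by (simp add: sets_rand_law space_randomness_M)
  have "qprob \<omega> x (\<lambda>\<eta>. P (\<lambda>n. \<eta> (a n) (x + b n)))
          = measure (rand_law \<omega>) (shift_rand x -` ?S \<inter> space (rand_law \<omega>))"
    by (simp add: qprob_def space_rand_law eta_add_start)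
  also have "\<dots> = measure (distr (rand_law \<omega>) (rand_law (shift_seq x \<omega>)) (shift_rand x)) ?S"
    by (rule measure_distr[OF measurable_shift_rand S, symmetric])
  also have "\<dots> = qprob (shift_seq x \<omega>) 0 (\<lambda>\<eta>. P (\<lambda>n. \<eta> (a n) (b n)))"
    by (simp add: distr_rand_law_shift_rand qprob_def space_rand_law)
  finally show ?thesis .
qed

section \<open>Measurable dependence of the quenched law on the environment\<close>

context
begin

interpretation pmf_as_function .

lemma pmf_bernoulli_pmf:
  "pmf (bernoulli_pmf h) b = (if b then min 1 (max 0 h) else 1 - min 1 (max 0 h))"
  by transfer auto

end

lemma measurable_measure_pmf_kernel:
  fixes F :: "'a \<Rightarrow> 'b::countable pmf"
  assumes "\<And>b. (\<lambda>x. pmf (F x) b) \<in> borel_measurable M"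
  shows "(\<lambda>x. measure_pmf (F x)) \<in> measurable M (subprob_algebra (count_space UNIV))"
proof (rule measurable_subprob_algebra)
  fix A :: "'b set"
  have "(\<lambda>p. ennreal (pmf (F (fst p)) (snd p)) * indicator A (snd p))
          \<in> borel_measurable (M \<Otimes>\<^sub>M count_space UNIV)"
    by (rule measurable_compose_countable[where f = "\<lambda>b p. ennreal (pmf (F (fst p)) b) * indicator A b"])
      (use assms in measurable)
  then have "(\<lambda>x. \<integral>\<^sup>+ b. ennreal (pmf (F x) b) * indicator A b \<partial>count_space UNIV) \<in> borel_measurable M"
    by (intro sigma_finite_measure.borel_measurable_nn_integral
        sigma_finite_measure_count_space_countable) (simp_all add: case_prod_beta)
  then show "(\<lambda>x. emeasure (measure_pmf (F x)) A) \<in> borel_measurable M"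
    by (simp add: nn_integral_measure_pmf[symmetric] nn_integral_indicator)
qed (simp_all add: prob_space_imp_subprob_space prob_space_measure_pmf)

lemma measurable_measure_pmf_offspring_M:
  "measure_pmf \<in> measurable offspring_M (subprob_algebra (count_space UNIV))"
proof (rule measurable_measure_pmf_kernel[where F = "\<lambda>\<mu>. \<mu>"])
  fix b :: nat
  have "pmf \<in> measurable offspring_M (Pi\<^sub>M UNIV (\<lambda>_::nat. borel))"
    unfolding offspring_M_def by (rule measurable_vimage_algebra1) (auto simp: space_PiM)
  then show "(\<lambda>\<mu>. pmf \<mu> b) \<in> borel_measurable offspring_M"
    by measurable
qed

lemma measurable_bernoulli_kernel:
  "(\<lambda>h. measure_pmf (bernoulli_pmf h)) \<in> measurable borel (subprob_algebra (count_space UNIV))"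
  by (rule measurable_measure_pmf_kernel) (unfold pmf_bernoulli_pmf, measurable)

lemma measurable_PiM_kernel:
  assumes K: "\<And>i. i \<in> I \<Longrightarrow> N i \<in> measurable M (subprob_algebra (C i))"
    and prob: "\<And>i \<omega>. i \<in> I \<Longrightarrow> \<omega> \<in> space M \<Longrightarrow> prob_space (N i \<omega>)"
  shows "(\<lambda>\<omega>. \<Pi>\<^sub>M i\<in>I. N i \<omega>) \<in> measurable M (subprob_algebra (\<Pi>\<^sub>M i\<in>I. C i))"
proof -
  have sets: "sets (N i \<omega>) = sets (C i)" if "\<omega> \<in> space M" "i \<in> I" for \<omega> i
    using sets_kernel[OF K] that by blast
  then have spaces: "space (N i \<omega>) = space (C i)" if "\<omega> \<in> space M" "i \<in> I" for \<omega> i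
    using that by (metis sets_eq_imp_space_eq)
  have prob_PiM: "prob_space (\<Pi>\<^sub>M i\<in>I. N i \<omega>)" if "\<omega> \<in> space M" for \<omega>
    using prob that by (intro prob_space_PiM) auto
  have emb: "emeasure (\<Pi>\<^sub>M i\<in>I. N i \<omega>) (prod_emb I C J (Pi\<^sub>E J E)) = (\<Prod>i\<in>J. emeasure (N i \<omega>) (E i))"
    if "\<omega> \<in> space M" "finite J" "J \<subseteq> I" "\<And>i. i \<in> J \<Longrightarrow> E i \<in> sets (C i)" for \<omega> J E
  proof -
    have "prod_emb I C J (Pi\<^sub>E J E) = prod_emb I (\<lambda>i. N i \<omega>) J (Pi\<^sub>E J E)"
      unfolding prod_emb_def using spaces[OF that(1)] by (auto simp: PiE_def Pi_def)
    then show ?thesis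
      using that sets prob by (simp add: emeasure_PiM_emb subsetD)
  qed
  show ?thesis
  proof (rule measurable_subprob_algebra_generated
      [OF sets_PiM Int_stable_prod_algebra prod_algebra_sets_into_space])
    fix \<omega> assume "\<omega> \<in> space M"
    then show "subprob_space (\<Pi>\<^sub>M i\<in>I. N i \<omega>)" "sets (\<Pi>\<^sub>M i\<in>I. N i \<omega>) = sets (\<Pi>\<^sub>M i\<in>I. C i)"
      by (auto intro!: prob_space_imp_subprob_space sets_PiM_cong simp: sets prob_PiM)
  next
    fix A assume "A \<in> prod_algebra I C"
    then obtain J E where A: "A = prod_emb I C J (Pi\<^sub>E J E)" and J: "finite J" "J \<subseteq> I"
      and E: "\<And>i. i \<in> J \<Longrightarrow> E i \<in> sets (C i)"
      by (rule prod_algebraE) auto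
    have "(\<lambda>\<omega>. \<Prod>i\<in>J. emeasure (N i \<omega>) (E i)) \<in> borel_measurable M"
      using K E J by (intro borel_measurable_prod_ennreal measurable_emeasure_kernel) auto
    then show "(\<lambda>\<omega>. emeasure (\<Pi>\<^sub>M i\<in>I. N i \<omega>) A) \<in> borel_measurable M"
      by (rule measurable_cong[THEN iffD1, rotated]) (simp add: A emb J E)
  next
    have "emeasure (\<Pi>\<^sub>M i\<in>I. N i \<omega>) (\<Pi>\<^sub>E i\<in>I. space (C i)) = 1" if "\<omega> \<in> space M" for \<omega>
      using that prob_space.emeasure_space_1[OF prob_PiM[OF that]]
      by (simp add: space_PiM spaces cong: PiE_cong)
    then show "(\<lambda>\<omega>. emeasure (\<Pi>\<^sub>M i\<in>I. N i \<omega>) (\<Pi>\<^sub>E i\<in>I. space (C i))) \<in> borel_measurable M"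
      by (subst measurable_cong[where g = "\<lambda>_. 1"]) simp_all
  qed
qed

lemma measurable_rand_law:
  assumes "sets \<alpha> = sets site_M"
  shows "rand_law \<in> measurable (env_law \<alpha>) (subprob_algebra randomness_M)"
proof -
  have site: "(\<lambda>\<omega>. \<omega> y) \<in> measurable (env_law \<alpha>) (offspring_M \<Otimes>\<^sub>M borel)" for y
    unfolding env_law_def measurable_cong_sets[OF refl assms[symmetric, unfolded site_M_def]]
    by measurable
  have "(\<lambda>\<omega>. measure_pmf (fst (\<omega> y))) \<in> measurable (env_law \<alpha>) (subprob_algebra (count_space UNIV))" for y
    using measurable_compose[OF measurable_compose[OF site measurable_fst]
        measurable_measure_pmf_offspring_M] .
  moreover have "(\<lambda>\<omega>. measure_pmf (bernoulli_pmf (snd (\<omega> y))))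
                   \<in> measurable (env_law \<alpha>) (subprob_algebra (count_space UNIV))" for y
    using measurable_compose[OF measurable_compose[OF site measurable_snd]
        measurable_bernoulli_kernel] .
  ultimately show ?thesis
    unfolding rand_law_def[abs_def]
    by (intro measurable_pair_measure measurable_PiM_kernel) (auto intro: prob_space_measure_pmf)
qed

section \<open>Ergodicity of the shift on an i.i.d. sequence\<close>

abbreviation iid_seq :: "'a measure \<Rightarrow> (nat \<Rightarrow> 'a) measure" where
  "iid_seq M \<equiv> \<Pi>\<^sub>M i\<in>UNIV. M"

lemma measurable_shift_seq: "shift_seq x \<in> measurable (iid_seq M) (iid_seq M)"
  unfolding shift_seq_def
  by (rule measurable_PiM_single'[where f = "\<lambda>i \<omega>. \<omega> (i + x)"]) (auto simp: space_PiM)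

lemma distr_shift_seq:
  assumes "prob_space M"
  shows "distr (iid_seq M) (iid_seq M) (shift_seq x) = (iid_seq M)"
proof -
  have "inj (\<lambda>n::nat. n + x)" by (auto simp: inj_def)
  then have "distr (iid_seq M) (iid_seq M) (\<lambda>\<omega>. \<lambda>n\<in>UNIV. \<omega> (n + x)) = (iid_seq M)"
    using distr_PiM_reindex[where K = UNIV and M = "\<lambda>_. M" and f = "\<lambda>n. n + x" and I = UNIV] assms
    by simp
  then show ?thesis by (simp add: shift_seq_def[abs_def] restrict_UNIV)
qed

lemma indep_vars_coordinates:
  assumes "prob_space M"
  shows "prob_space.indep_vars (iid_seq M) (\<lambda>_. M) (\<lambda>i \<omega>. \<omega> i) UNIV"
proof -
  interpret P: prob_space "iid_seq M"
    using assms by (rule prob_space_PiM)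
  have "iid_seq M = (\<Pi>\<^sub>M i\<in>UNIV. distr (iid_seq M) M (\<lambda>\<omega>. \<omega> i))"
    by (rule PiM_cong) (auto intro!: distr_PiM_component[symmetric] assms)
  then show ?thesis
    by (subst P.indep_vars_iff_distr_eq_PiM') (simp_all add: restrict_UNIV)
qed

lemma shift_invariant_prob_0_or_1:
  fixes M :: "'a measure"
  assumes M: "prob_space M" and B: "B \<in> sets (iid_seq M)"
    and invariant: "\<And>n \<omega>. \<omega> \<in> space (iid_seq M) \<Longrightarrow> shift_seq n \<omega> \<in> B \<longleftrightarrow> \<omega> \<in> B"
  shows "measure (iid_seq M) B = 0 \<or> measure (iid_seq M) B = 1"
proof -
  define P where "P = (iid_seq M)"
  interpret P: prob_space P
    unfolding P_def using M by (rule prob_space_PiM)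
  define F where "F i = sigma_sets (space P) {(\<lambda>\<omega>. \<omega> i) -` S \<inter> space P | S. S \<in> sets M}" for i :: nat
  have "P.indep_vars (\<lambda>_. M) (\<lambda>i \<omega>. \<omega> i) UNIV"
    using indep_vars_coordinates[OF M] by (simp add: P_def)
  then have indep: "P.indep_sets F UNIV"
    unfolding P.indep_vars_def F_def by simp
  have F_sigma: "sigma_algebra (space P) (F i)" for i
    unfolding F_def by (rule sigma_algebra_sigma_sets) auto
  have "B \<in> P.tail_events F"
    unfolding P.tail_events_def
  proof
    fix n :: nat
    let ?T = "sigma (space P) (\<Union>(F ` {n..}))"
    have gen: "\<Union>(F ` {n..}) \<subseteq> Pow (space P)"
      unfolding F_def by (auto dest: sigma_sets_into_sp[rotated])
    have sets_T: "sets ?T = sigma_sets (space P) (\<Union>(F ` {n..}))" and space_T: "space ?T = space P"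
      using gen by simp_all
    have "shift_seq n \<in> measurable ?T (iid_seq M)"
      unfolding shift_seq_def
    proof (rule measurable_PiM_single)
      show "(\<lambda>\<omega> i. \<omega> (i + n)) \<in> space ?T \<rightarrow> (\<Pi>\<^sub>E i\<in>UNIV. space M)"
        unfolding space_T by (auto simp: P_def space_PiM)
    next
      fix S i assume "S \<in> sets M"
      then have "(\<lambda>\<omega>. \<omega> (i + n)) -` S \<inter> space P \<in> F (i + n)"
        unfolding F_def by (intro sigma_sets.Basic) blast
      moreover have "F (i + n) \<subseteq> sets ?T"
        unfolding sets_T by (intro subsetI sigma_sets.Basic) auto
      ultimately show "{\<omega> \<in> space ?T. \<omega> (i + n) \<in> S} \<in> sets ?T"
        by (auto simp: space_T vimage_def Int_def conj_commute)
    qed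
    moreover have "B = shift_seq n -` B \<inter> space ?T"
      unfolding space_T using invariant sets.sets_into_space[OF B] by (auto simp: P_def)
    ultimately show "B \<in> sigma_sets (space P) (\<Union>(F ` {n..}))"
      using B measurable_sets[of "shift_seq n" ?T "iid_seq M" B] sets_T by (simp add: P_def)
  qed
  then have "measure P B = 0 \<or> measure P B = 1"
    by (rule P.kolmogorov_0_1_law[OF F_sigma indep])
  then show ?thesis by (simp add: P_def)
qed

lemma AE_frequently_shift_seq_in:
  assumes M: "prob_space M" and G: "G \<in> sets (iid_seq M)"
    and pos: "measure (iid_seq M) G > 0"
  shows "AE \<omega> in iid_seq M. \<exists>\<^sub>F x in sequentially. shift_seq x \<omega> \<in> G"
proof -
  define P where "P = (iid_seq M)"
  interpret P: prob_space P
    unfolding P_def using M by (rule prob_space_PiM)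
  define A where "A x = shift_seq x -` G \<inter> space P" for x
  have A_sets: "A x \<in> sets P" for x
    unfolding A_def P_def using G by (rule measurable_sets[OF measurable_shift_seq])
  have A_measure: "measure P (A x) = measure P G" for x
    using measure_distr[OF measurable_shift_seq G, of x] distr_shift_seq[OF M]
    by (simp add: A_def P_def)
  define B where "B = {\<omega> \<in> space P. \<exists>\<^sub>F x in sequentially. shift_seq x \<omega> \<in> G}"
  have B_eq: "B = (\<Inter>n. \<Union>x\<in>{n..}. A x)"
    by (simp add: B_def A_def frequently_sequentially set_eq_iff) blast
  have B_sets: "B \<in> sets P"
    unfolding B_eq using A_sets by auto
  have lim: "(\<lambda>n. measure P (\<Union>x\<in>{n..}. A x)) \<longlonglongrightarrow> measure P B"
    unfolding B_eq using A_sets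
    by (intro P.finite_Lim_measure_decseq) (auto simp: decseq_def intro: order_trans)
  have "measure P G \<le> measure P (\<Union>x\<in>{n..}. A x)" for n
    unfolding A_measure[of n, symmetric] using A_sets by (intro P.finite_measure_mono) auto
  then have "measure P G \<le> measure P B"
    by (intro LIMSEQ_le_const[OF lim]) auto
  moreover have "shift_seq n \<omega> \<in> B \<longleftrightarrow> \<omega> \<in> B" if "\<omega> \<in> space P" for n \<omega>
  proof -
    have "shift_seq n \<omega> \<in> space P"
      using measurable_space[OF measurable_shift_seq that[unfolded P_def]] by (simp add: P_def)
    moreover have "(\<exists>\<^sub>F x in sequentially. shift_seq (x + n) \<omega> \<in> G)
                   \<longleftrightarrow> (\<exists>\<^sub>F x in sequentially. shift_seq x \<omega> \<in> G)"
      unfolding frequently_def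
      using eventually_sequentially_seg[where P = "\<lambda>x. shift_seq x \<omega> \<notin> G"] by simp
    ultimately show ?thesis
      using that by (simp add: B_def shift_seq_shift_seq)
  qed
  ultimately have "measure P B = 1"
    using shift_invariant_prob_0_or_1[OF M B_sets[unfolded P_def]] pos by (fastforce simp: P_def)
  then have "AE \<omega> in P. \<omega> \<in> B"
    by (rule P.AE_prob_1)
  then show ?thesis
    unfolding P_def[symmetric] by eventually_elim (simp add: B_def)
qed

lemma (in prob_space) AE_pos_imp_prob_gt_pos:
  fixes g :: "'a \<Rightarrow> real"
  assumes g: "g \<in> borel_measurable M" and pos: "AE \<omega> in M. g \<omega> > 0"
  shows "\<exists>\<nu>>0. prob {\<omega> \<in> space M. g \<omega> > \<nu>} > 0"
proof -
  have "\<exists>k::nat. \<not> (AE \<omega> in M. g \<omega> \<le> 1 / Suc k)"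
  proof (rule ccontr)
    assume "\<not> ?thesis"
    then have "AE \<omega> in M. \<forall>k::nat. g \<omega> \<le> 1 / Suc k"
      by (simp add: AE_all_countable)
    with pos have "AE \<omega> in M. False"
    proof eventually_elim
      case (elim \<omega>)
      obtain k :: nat where "1 / Suc k < g \<omega>"
        using reals_Archimedean[OF elim(1)] by (auto simp: inverse_eq_divide)
      with elim(2) show False by (meson not_le)
    qed
    then show False by (simp add: AE_False)
  qed
  then obtain k :: nat where k: "\<not> (AE \<omega> in M. g \<omega> \<le> 1 / Suc k)" ..
  have sets: "{\<omega> \<in> space M. g \<omega> > 1 / Suc k} \<in> events"
    using g by measurable
  have "emeasure M {\<omega> \<in> space M. g \<omega> > 1 / Suc k} \<noteq> 0"
  proof
    assume "emeasure M {\<omega> \<in> space M. g \<omega> > 1 / Suc k} = 0"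
    then have "AE \<omega> in M. g \<omega> \<le> 1 / Suc k"
      by (subst AE_iff_measurable[OF sets]) (auto simp: not_le)
    with k show False ..
  qed
  then have "prob {\<omega> \<in> space M. g \<omega> > 1 / Suc k} > 0"
    by (simp add: emeasure_eq_measure zero_less_measure_iff)
  then show ?thesis
    by (intro exI[of _ "1 / Suc k"]) simp
qed

lemma AE_frequently_shift_seq_gt:
  fixes g :: "(nat \<Rightarrow> 'a) \<Rightarrow> real"
  assumes M: "prob_space M" and g: "g \<in> borel_measurable (iid_seq M)"
    and pos: "AE \<omega> in iid_seq M. g \<omega> > 0"
  shows "\<exists>\<nu>>0. AE \<omega> in iid_seq M. \<exists>\<^sub>F x in sequentially. g (shift_seq x \<omega>) > \<nu>"
proof -
  interpret P: prob_space "iid_seq M"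
    using M by (rule prob_space_PiM)
  obtain \<nu> where \<nu>: "\<nu> > 0" and G_pos: "P.prob {\<omega> \<in> space (iid_seq M). g \<omega> > \<nu>} > 0"
    using P.AE_pos_imp_prob_gt_pos[OF g pos] by blast
  have "{\<omega> \<in> space (iid_seq M). g \<omega> > \<nu>} \<in> P.events"
    using g by measurable
  from AE_frequently_shift_seq_in[OF M this G_pos]
  have "AE \<omega> in iid_seq M. \<exists>\<^sub>F x in sequentially. g (shift_seq x \<omega>) > \<nu>"
    by (rule AE_mp) (auto elim: frequently_elim1)
  with \<nu> show ?thesis by blast
qed

lemma frequently_sequentially_imp_strict_mono:
  assumes "\<exists>\<^sub>F n in sequentially. P n"
  shows "\<exists>r::nat \<Rightarrow> nat. strict_mono r \<and> (\<forall>l. P (r l))"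
  using infinite_enumerate[of "{n. P n}"] assms
  by (simp add: frequently_cofinite cofinite_eq_sequentially[symmetric])

theorem corollary1:
  fixes \<alpha> :: "site_env measure" and \<beta> :: "real \<Rightarrow> real"
    and \<delta> \<epsilon> :: real and r s N0 :: nat
  assumes "prob_space \<alpha>" and "sets \<alpha> = sets site_M"
    and "AE e in \<alpha>. 0 < snd e \<and> snd e \<le> 1"
    and "\<delta> > 0"
    and "measure \<alpha> {e \<in> space \<alpha>. pmf (fst e) 1 = 1} < 1"
    and "measure \<alpha> {e \<in> space \<alpha>. pmf (fst e) 0 \<le> 1 - \<delta> \<and> \<delta> \<le> snd e \<and> snd e \<le> 1 - \<delta>} = 1"
    and "esssup \<alpha> (\<lambda>e. mean_off (fst e)) < \<infinity>"
    and "is_beta \<alpha> \<beta>"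
    and "\<epsilon> > 0" and "1 \<le> r" and "r \<le> s" and "\<beta> (real r / real s) - \<epsilon> > 0"
    and "1 \<le> N0"
    and "AE \<omega> in env_law \<alpha>.
           qprob \<omega> 0 (\<lambda>\<eta>. liminf (\<lambda>n. lg (\<eta> (n * s * N0) (n * r * N0)) / ereal (real (n * s * N0)))
                           \<ge> ereal (\<beta> (real r / real s) - \<epsilon>)) > 0"
  shows "\<exists>\<nu>>0. AE \<omega> in env_law \<alpha>. \<exists>x :: nat \<Rightarrow> nat. strict_mono x \<and>
           (\<forall>l. qprob \<omega> (x l) (\<lambda>\<eta>. liminf (\<lambda>n. lg (\<eta> (n * s * N0) (x l + n * r * N0)) / ereal (real (n * s * N0)))
                           \<ge> ereal (\<beta> (real r / real s) - \<epsilon>)) > \<nu>)"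
proof -
  define grows where
    "grows \<xi> \<longleftrightarrow> ereal (\<beta> (real r / real s) - \<epsilon>) \<le> liminf (\<lambda>n. lg (\<xi> n) / ereal (real (n * s * N0)))"
    for \<xi> :: "nat \<Rightarrow> nat"
  define g where "g \<omega> = qprob \<omega> 0 (\<lambda>\<eta>. grows (\<lambda>n. \<eta> (n * s * N0) (n * r * N0)))" for \<omega>
  define S where "S = {kb \<in> space randomness_M. grows (\<lambda>n. eta 0 kb (n * s * N0) (n * r * N0))}"
  have S: "S \<in> sets randomness_M"
    unfolding S_def grows_def by (rule sets_liminf_lg_eta)
  have "g \<in> borel_measurable (env_law \<alpha>)"
    unfolding g_def[abs_def] qprob_def space_rand_law
    using measurable_compose[OF measurable_rand_law[OF assms(2)]
        measurable_measure_subprob_algebra[OF S]]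
    by (simp add: S_def space_randomness_M)
  moreover have "AE \<omega> in env_law \<alpha>. g \<omega> > 0"
    using assms(14) by (simp add: g_def grows_def)
  ultimately obtain \<nu> where "\<nu> > 0"
    and frequently: "AE \<omega> in env_law \<alpha>. \<exists>\<^sub>F x in sequentially. g (shift_seq x \<omega>) > \<nu>"
    using AE_frequently_shift_seq_gt[OF assms(1)] unfolding env_law_def by blast
  have shift: "qprob \<omega> x (\<lambda>\<eta>. grows (\<lambda>n. \<eta> (n * s * N0) (x + n * r * N0)))
                 = g (shift_seq x \<omega>)" for \<omega> x
    unfolding g_def using S by (intro qprob_shift_start) (simp add: S_def)
  have "AE \<omega> in env_law \<alpha>. \<exists>x :: nat \<Rightarrow> nat. strict_mono x \<and> (\<forall>l. g (shift_seq (x l) \<omega>) > \<nu>)"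
    using frequently by eventually_elim (rule frequently_sequentially_imp_strict_mono)
  then show ?thesis
    using \<open>\<nu> > 0\<close> shift unfolding grows_def by (intro exI[of _ \<nu>]) auto
qed

end
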